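(* Let $X$ and $Y$ be spaces with $X$ compact Hausdorff and let $U$ be an unbased space. Then for every $s\ge0$ the homomorphism $\langle\Xi^U\rangle\colon\langle Y^X\rangle\to\langle (Y^X)^{(U)}\rangle$ maps $\langle Y^X\rangle^{(s)}$ into $\langle (Y^X)^{(U)}\rangle^{(s)}_X$.
   Context: Spaces and maps are based unless called unbased. $\langle W\rangle$ = free abelian group on a set $W$; functions induce homomorphisms $\langle f\rangle$. $Y^X$ = based maps $X\to Y$ (compact-open topology). For $R\subseteq Z$ containing the basepoint, $V\mapsto V|_R$ is induced by restriction. $\mathcal F_n(Z)$ = finite subsets of $Z$ containing the basepoint with at most $n+1$ elements; $\langle Y^Z\rangle^{(s)}=\{V: V|_R=0\ \forall R\in\mathcal F_{s-1}(Z)\}$. $(Y^X)^{(U)}$ is the set of unbased maps $U\to Y^X$; $\Xi^U\colon Y^X\to (Y^X)^{(U)}$ sends $d$ to the constant map at $d$. With $x_0$ the basepoint of $X$, $U\wr X=(U\times X)/(U\times\{x_0\})$ (based at the collapsed set), $\#^X\colon(Y^X)^{(U)}\to Y^{U\wr X}$, $\#^X(w)(u\wr x)=w(u)(x)$, and $\langle (Y^X)^{(U)}\rangle^{(s)}_X=\langle\#^X\rangle^{-1}(\langle Y^{U\wr X}\rangle^{(s)})$. *)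

theory Defs
  imports "HOL-Analysis.Analysis" "HOL-Algebra.Free_Abelian_Groups"
begin

text \<open>A based space is a topology together with a basepoint in its carrier.
  Maps are represented extensionally (restricted to the carrier), so that
  distinct HOL functions give distinct maps.\<close>

definition based_maps :: "'a topology \<Rightarrow> 'a \<Rightarrow> 'b topology \<Rightarrow> 'b \<Rightarrow> ('a \<Rightarrow> 'b) set" where
  "based_maps X x0 Y y0 =
     {f. continuous_map X Y f \<and> f x0 = y0 \<and> f \<in> extensional (topspace X)}"

definition compact_open :: "'a topology \<Rightarrow> 'a \<Rightarrow> 'b topology \<Rightarrow> 'b \<Rightarrow> ('a \<Rightarrow> 'b) topology" where
  "compact_open X x0 Y y0 =
     topology_generated_by
       {{f \<in> based_maps X x0 Y y0. f ` K \<subseteq> W} | K W. compactin X K \<and> openin Y W}"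

definition unbased_maps_into :: "'c topology \<Rightarrow> 'a topology \<Rightarrow> 'a \<Rightarrow> 'b topology \<Rightarrow> 'b
    \<Rightarrow> ('c \<Rightarrow> 'a \<Rightarrow> 'b) set" where
  "unbased_maps_into U X x0 Y y0 =
     {w. continuous_map U (compact_open X x0 Y y0) w \<and> w \<in> extensional (topspace U)}"

definition Xi :: "'c topology \<Rightarrow> ('a \<Rightarrow> 'b) \<Rightarrow> ('c \<Rightarrow> 'a \<Rightarrow> 'b)" where
  "Xi U d = (\<lambda>u\<in>topspace U. d)"

text \<open>The wreath space U wr X = (U x X)/(U x {x0}); the collapsed set is the point None,
  the class of (u,x) with x ~= x0 is Some (u,x).  Its basepoint is None.\<close>
definition wr_quot :: "'a \<Rightarrow> 'c \<times> 'a \<Rightarrow> ('c \<times> 'a) option" where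
  "wr_quot x0 p = (if snd p = x0 then None else Some p)"

definition wr_space :: "'c topology \<Rightarrow> 'a topology \<Rightarrow> 'a \<Rightarrow> ('c \<times> 'a) option topology" where
  "wr_space U X x0 =
     topology (\<lambda>S. S \<subseteq> insert None (wr_quot x0 ` topspace (prod_topology U X)) \<and>
                  openin (prod_topology U X)
                    {p \<in> topspace (prod_topology U X). wr_quot x0 p \<in> S})"

definition sharp :: "'c topology \<Rightarrow> 'a topology \<Rightarrow> 'a \<Rightarrow> 'b \<Rightarrow> ('c \<Rightarrow> 'a \<Rightarrow> 'b)
    \<Rightarrow> ('c \<times> 'a) option \<Rightarrow> 'b" where
  "sharp U X x0 y0 w =
     (\<lambda>z\<in>topspace (wr_space U X x0).
        (case z of None \<Rightarrow> y0 | Some (u, x) \<Rightarrow> w u x))"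

definition free_hom :: "('a \<Rightarrow> 'b) \<Rightarrow> ('a \<Rightarrow>\<^sub>0 int) \<Rightarrow> ('b \<Rightarrow>\<^sub>0 int)" where
  "free_hom f = frag_extend (\<lambda>w. frag_of (f w))"

text \<open>F_n(Z) (n an integer, so that F_{-1} is empty).\<close>
definition Fsets :: "'a topology \<Rightarrow> 'a \<Rightarrow> int \<Rightarrow> 'a set set" where
  "Fsets Z z0 n = {R. finite R \<and> R \<subseteq> topspace Z \<and> z0 \<in> R \<and> int (card R) \<le> n + 1}"

definition filt :: "'a topology \<Rightarrow> 'a \<Rightarrow> 'b topology \<Rightarrow> 'b \<Rightarrow> nat \<Rightarrow> (('a \<Rightarrow> 'b) \<Rightarrow>\<^sub>0 int) set" where
  "filt Z z0 Y y0 s =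
     {V \<in> carrier (free_Abelian_group (based_maps Z z0 Y y0)).
        \<forall>R \<in> Fsets Z z0 (int s - 1). free_hom (\<lambda>d. restrict d R) V = 0}"

definition filt_U :: "'c topology \<Rightarrow> 'a topology \<Rightarrow> 'a \<Rightarrow> 'b topology \<Rightarrow> 'b \<Rightarrow> nat
    \<Rightarrow> (('c \<Rightarrow> 'a \<Rightarrow> 'b) \<Rightarrow>\<^sub>0 int) set" where
  "filt_U U X x0 Y y0 s =
     {W \<in> carrier (free_Abelian_group (unbased_maps_into U X x0 Y y0)).
        free_hom (sharp U X x0 y0) W \<in> filt (wr_space U X x0) None Y y0 s}"

end

theory Submission
  imports Defs
begin

text \<open>Under \<open>\<sharp>\<^sup>X\<close> the constant map \<open>\<Xi>\<^sup>U d\<close> becomes \<open>d \<circ> \<pi>\<close>, where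
  \<open>\<pi> : U wr X \<rightarrow> X\<close> is the based projection \<open>u wr x \<mapsto> x\<close>. Restricting \<open>d \<circ> \<pi>\<close> to a
  finite set \<open>R\<close> only depends on the restriction of \<open>d\<close> to \<open>\<pi> R\<close>, which has at most as many
  points as \<open>R\<close>; so precomposition with a based map preserves the filtration.
  Of the hypotheses only \<open>x0 \<in> topspace X\<close> is needed: compactness and the Hausdorff
  property matter for \<open>\<sharp>\<^sup>X\<close> on general maps, not on constant ones.\<close>

lemma free_hom_compose: "free_hom g (free_hom f c) = free_hom (g \<circ> f) c"
  unfolding free_hom_def
  using frag_extend_compose[of "\<lambda>w. frag_of (g w)" f c]
  by (simp add: comp_def)

lemma keys_free_hom: "Poly_Mapping.keys (free_hom f c) \<subseteq> f ` Poly_Mapping.keys c"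
  unfolding free_hom_def using keys_frag_extend[of "\<lambda>w. frag_of (f w)" c] by auto

lemma free_hom_cong:
  "(\<And>x. x \<in> Poly_Mapping.keys c \<Longrightarrow> f x = g x) \<Longrightarrow> free_hom f c = free_hom g c"
  unfolding free_hom_def by (rule frag_extend_eq) simp

lemma free_hom_zero [simp]: "free_hom f 0 = 0"
  unfolding free_hom_def by simp

lemma free_hom_in_free_Abelian_group:
  assumes "c \<in> carrier (free_Abelian_group S)" and "f ` S \<subseteq> T"
  shows "free_hom f c \<in> carrier (free_Abelian_group T)"
  using assms keys_free_hom[of f c] by fastforce

lemma Fsets_image:
  assumes "R \<in> Fsets Z' z0' n" and "g z0' = z0" and "g \<in> topspace Z' \<rightarrow> topspace Z"
  shows "g ` R \<in> Fsets Z z0 n"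
proof -
  have "card (g ` R) \<le> card R"
    using assms(1) by (simp add: Fsets_def card_image_le)
  then show ?thesis
    using assms by (force simp: Fsets_def)
qed

lemma restrict_compose_factor:
  "restrict (d \<circ> g) R = (\<lambda>e. \<lambda>z\<in>R. e (g z)) (restrict d (g ` R))"
  by (auto simp: fun_eq_iff)

lemma free_hom_precompose_filt:
  assumes "g z0' = z0" and "g \<in> topspace Z' \<rightarrow> topspace Z"
    and based: "\<And>d. d \<in> based_maps Z z0 Y y0 \<Longrightarrow> \<phi> d \<in> based_maps Z' z0' Y y0"
    and precompose: "\<And>d z. \<lbrakk>d \<in> based_maps Z z0 Y y0; z \<in> topspace Z'\<rbrakk> \<Longrightarrow> \<phi> d z = d (g z)"
  shows "free_hom \<phi> ` filt Z z0 Y y0 s \<subseteq> filt Z' z0' Y y0 s"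
proof clarify
  fix V assume V: "V \<in> filt Z z0 Y y0 s"
  then have V_carrier: "V \<in> carrier (free_Abelian_group (based_maps Z z0 Y y0))"
    by (simp add: filt_def)
  have "free_hom (\<lambda>e. restrict e R) (free_hom \<phi> V) = 0"
    if R: "R \<in> Fsets Z' z0' (int s - 1)" for R
  proof -
    have "R \<subseteq> topspace Z'"
      using R by (simp add: Fsets_def)
    then have "restrict (\<phi> d) R = (\<lambda>e. \<lambda>z\<in>R. e (g z)) (restrict d (g ` R))"
      if "d \<in> based_maps Z z0 Y y0" for d
      using precompose[OF that] restrict_compose_factor[of d g R]
      by (auto simp: fun_eq_iff)
    then have "free_hom (\<lambda>e. restrict e R) (free_hom \<phi> V)
        = free_hom (\<lambda>e. \<lambda>z\<in>R. e (g z)) (free_hom (\<lambda>d. restrict d (g ` R)) V)"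
      using V_carrier by (auto simp: free_hom_compose intro!: free_hom_cong)
    moreover have "free_hom (\<lambda>d. restrict d (g ` R)) V = 0"
      using V Fsets_image[OF R assms(1,2)] by (simp add: filt_def)
    ultimately show ?thesis
      by simp
  qed
  moreover have "free_hom \<phi> V \<in> carrier (free_Abelian_group (based_maps Z' z0' Y y0))"
    using V_carrier by (rule free_hom_in_free_Abelian_group) (auto intro: based)
  ultimately show "free_hom \<phi> V \<in> filt Z' z0' Y y0 s"
    by (simp add: filt_def)
qed

lemma istopology_quotient_open:
  "istopology (\<lambda>S. S \<subseteq> A \<and> openin P {p \<in> topspace P. q p \<in> S})"
proof -
  have "{p \<in> topspace P. q p \<in> S \<inter> T} = {p \<in> topspace P. q p \<in> S} \<inter> {p \<in> topspace P. q p \<in> T}"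
    for S T by auto
  moreover have "{p \<in> topspace P. q p \<in> \<Union>\<K>} = (\<Union>S\<in>\<K>. {p \<in> topspace P. q p \<in> S})" for \<K>
    by auto
  ultimately show ?thesis
    unfolding istopology_def by (auto intro!: openin_Int openin_Union)
qed

lemma openin_wr_space:
  "openin (wr_space U X x0) S \<longleftrightarrow>
     S \<subseteq> insert None (wr_quot x0 ` topspace (prod_topology U X)) \<and>
     openin (prod_topology U X) {p \<in> topspace (prod_topology U X). wr_quot x0 p \<in> S}"
  unfolding wr_space_def topology_inverse'[OF istopology_quotient_open] ..

lemma topspace_wr_space:
  "topspace (wr_space U X x0) = insert None (wr_quot x0 ` topspace (prod_topology U X))"
proof
  show "topspace (wr_space U X x0) \<subseteq> insert None (wr_quot x0 ` topspace (prod_topology U X))"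
    using openin_wr_space[of U X x0 "topspace (wr_space U X x0)"] by simp
  have "openin (wr_space U X x0) (insert None (wr_quot x0 ` topspace (prod_topology U X)))"
  proof -
    have "{p \<in> topspace (prod_topology U X).
            wr_quot x0 p \<in> insert None (wr_quot x0 ` topspace (prod_topology U X))}
          = topspace (prod_topology U X)"
      by blast
    then show ?thesis
      unfolding openin_wr_space by (metis openin_topspace order_refl)
  qed
  then show "insert None (wr_quot x0 ` topspace (prod_topology U X)) \<subseteq> topspace (wr_space U X x0)"
    by (rule openin_subset)
qed

lemma wr_quot_in_topspace:
  "p \<in> topspace (prod_topology U X) \<Longrightarrow> wr_quot x0 p \<in> topspace (wr_space U X x0)"
  by (simp add: topspace_wr_space)

lemma Some_in_topspace_wr_space:
  assumes "Some (u, x) \<in> topspace (wr_space U X x0)"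
  shows "u \<in> topspace U" "x \<in> topspace X" "x \<noteq> x0"
  using assms unfolding topspace_wr_space wr_quot_def by (auto split: if_splits)

lemma continuous_map_from_wr_space:
  assumes "f \<in> topspace (wr_space U X x0) \<rightarrow> topspace Y"
    and "continuous_map (prod_topology U X) Y (f \<circ> wr_quot x0)"
  shows "continuous_map (wr_space U X x0) Y f"
  unfolding continuous_map_def
proof (intro conjI allI impI assms(1))
  fix W assume "openin Y W"
  then have "openin (prod_topology U X) {p \<in> topspace (prod_topology U X). f (wr_quot x0 p) \<in> W}"
    using openin_continuous_map_preimage[OF assms(2)] by simp
  moreover have "{p \<in> topspace (prod_topology U X). f (wr_quot x0 p) \<in> W}
      = {p \<in> topspace (prod_topology U X). wr_quot x0 p \<in> {z \<in> topspace (wr_space U X x0). f z \<in> W}}"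
    using wr_quot_in_topspace[of _ U X x0] by blast
  ultimately show "openin (wr_space U X x0) {z \<in> topspace (wr_space U X x0). f z \<in> W}"
    unfolding openin_wr_space topspace_wr_space[symmetric] by auto
qed

definition wr_proj :: "'a \<Rightarrow> ('c \<times> 'a) option \<Rightarrow> 'a" where
  "wr_proj x0 z = (case z of None \<Rightarrow> x0 | Some p \<Rightarrow> snd p)"

lemma wr_proj_in_topspace:
  "\<lbrakk>x0 \<in> topspace X; z \<in> topspace (wr_space U X x0)\<rbrakk> \<Longrightarrow> wr_proj x0 z \<in> topspace X"
  by (cases z) (auto simp: wr_proj_def dest: Some_in_topspace_wr_space)

lemma sharp_Xi:
  assumes "z \<in> topspace (wr_space U X x0)" and "d x0 = y0"
  shows "sharp U X x0 y0 (Xi U d) z = d (wr_proj x0 z)"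
  using assms Some_in_topspace_wr_space[of _ _ U X x0]
  by (auto simp: sharp_def Xi_def wr_proj_def split: option.splits)

lemma topspace_compact_open: "topspace (compact_open X x0 Y y0) = based_maps X x0 Y y0"
proof -
  have "{f \<in> based_maps X x0 Y y0. f ` {} \<subseteq> {}} \<in>
          {{f \<in> based_maps X x0 Y y0. f ` K \<subseteq> W} | K W. compactin X K \<and> openin Y W}"
    by blast
  then show ?thesis
    unfolding compact_open_def by auto
qed

lemma Xi_in_unbased_maps_into:
  assumes "d \<in> based_maps X x0 Y y0"
  shows "Xi U d \<in> unbased_maps_into U X x0 Y y0"
proof -
  have "continuous_map U (compact_open X x0 Y y0) (\<lambda>u. d)"
    using assms by (simp add: topspace_compact_open)
  then show ?thesis
    unfolding unbased_maps_into_def Xi_def by (auto elim: continuous_map_eq)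
qed

lemma sharp_Xi_in_based_maps:
  assumes d: "d \<in> based_maps X x0 Y y0" and "x0 \<in> topspace X"
  shows "sharp U X x0 y0 (Xi U d) \<in> based_maps (wr_space U X x0) None Y y0"
proof -
  have d_cont: "continuous_map X Y d" and "d x0 = y0"
    using d by (auto simp: based_maps_def)
  have sharp_eq: "sharp U X x0 y0 (Xi U d) z = d (wr_proj x0 z)"
    if "z \<in> topspace (wr_space U X x0)" for z
    using that \<open>d x0 = y0\<close> by (rule sharp_Xi)
  have "continuous_map (prod_topology U X) Y (d \<circ> snd)"
    using d_cont by (rule continuous_map_compose[OF continuous_map_snd])
  then have "continuous_map (prod_topology U X) Y (sharp U X x0 y0 (Xi U d) \<circ> wr_quot x0)"
    by (rule continuous_map_eq)
       (simp add: sharp_eq wr_quot_in_topspace, simp add: wr_proj_def wr_quot_def \<open>d x0 = y0\<close>)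
  moreover have "sharp U X x0 y0 (Xi U d) \<in> topspace (wr_space U X x0) \<rightarrow> topspace Y"
    using d_cont wr_proj_in_topspace[OF \<open>x0 \<in> topspace X\<close>]
    by (force simp: sharp_eq continuous_map_def)
  moreover have "sharp U X x0 y0 (Xi U d) \<in> extensional (topspace (wr_space U X x0))"
    unfolding sharp_def by (rule restrict_extensional)
  moreover have "None \<in> topspace (wr_space U X x0)"
    by (simp add: topspace_wr_space)
  ultimately show ?thesis
    using \<open>d x0 = y0\<close>
    by (simp add: based_maps_def sharp_eq wr_proj_def continuous_map_from_wr_space)
qed

theorem lemma14p1:
  fixes X :: "'a topology" and x0 :: 'a and Y :: "'b topology" and y0 :: 'b
    and U :: "'c topology" and s :: nat
  assumes "x0 \<in> topspace X" and "y0 \<in> topspace Y"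
    and "compact_space X" and "Hausdorff_space X"
  shows "free_hom (Xi U) ` filt X x0 Y y0 s \<subseteq> filt_U U X x0 Y y0 s"
proof clarify
  fix V assume V: "V \<in> filt X x0 Y y0 s"
  then have "V \<in> carrier (free_Abelian_group (based_maps X x0 Y y0))"
    unfolding filt_def by blast
  then have "free_hom (Xi U) V \<in> carrier (free_Abelian_group (unbased_maps_into U X x0 Y y0))"
    by (rule free_hom_in_free_Abelian_group) (auto intro: Xi_in_unbased_maps_into)
  moreover have "free_hom (sharp U X x0 y0 \<circ> Xi U) V \<in> filt (wr_space U X x0) None Y y0 s"
  proof (rule free_hom_precompose_filt[THEN subsetD])
    show "wr_proj x0 None = x0"
      by (simp add: wr_proj_def)
    show "wr_proj x0 \<in> topspace (wr_space U X x0) \<rightarrow> topspace X"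
      using assms(1) by (auto intro: wr_proj_in_topspace)
    show "(sharp U X x0 y0 \<circ> Xi U) d \<in> based_maps (wr_space U X x0) None Y y0"
      if "d \<in> based_maps X x0 Y y0" for d
      using sharp_Xi_in_based_maps[OF that assms(1)] by simp
    show "(sharp U X x0 y0 \<circ> Xi U) d z = d (wr_proj x0 z)"
      if "d \<in> based_maps X x0 Y y0" and "z \<in> topspace (wr_space U X x0)" for d z
      using that by (simp add: sharp_Xi based_maps_def)
  qed (rule imageI[OF V])
  ultimately show "free_hom (Xi U) V \<in> filt_U U X x0 Y y0 s"
    by (simp add: filt_U_def free_hom_compose)
qed

end
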